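(* Let $\mathbf{x}$ be a random vector in $\mathbb{R}^d$ and let $\beta\in\mathbb{R}^d$ be a fixed vector. Let $\mathcal{S}_1,\dots,\mathcal{S}_m\subset\{1,\dots,d\}$ be non-empty, pairwise disjoint index sets with $d_i=|\mathcal{S}_i|$, and for each $i$ let $\mathbf{x}^{(i)}=[\mathbf{x}_r, r\in\mathcal{S}_i]\in\mathbb{R}^{d_i}$ and $\beta^{(i)}=[\beta_r, r\in\mathcal{S}_i]\in\mathbb{R}^{d_i}$. Assume $\mathbf{x}^{(i)}$ has probability density $p_i$ with respect to Lebesgue measure $\mu_i$ on $\mathbb{R}^{d_i}$. For each $i$, fix a number of levels $K_i$ and consider quantizers $Q_i:\mathbb{R}^{d_i}\to\{c^{(i)}_1,\dots,c^{(i)}_{K_i}\}$ of the form $Q_i(x^{(i)})=c^{(i)}_k$ if $x^{(i)}\in\mathcal{D}^{(i)}_k$, where $c^{(i)}_k\in\mathbb{R}^{d_i}$ and $\mathcal{D}^{(i)}_1,\dots,\mathcal{D}^{(i)}_{K_i}$ partition $\mathbb{R}^{d_i}$. Set $\hat{\mathbf y}=\langle \mathbf{x},\beta\rangle$, $\tilde{\mathbf{x}}^{(i)}=Q_i(\mathbf{x}^{(i)})$, and $\tilde{\mathbf y}=\sum_{i=1}^m\langle\tilde{\mathbf{x}}^{(i)},\beta^{(i)}\rangle$ (i.e. $\langle\tilde{\mathbf x},\beta\rangle$ where $\tilde{\mathbf x}$ is the vector obtained by replacing each block $\mathbf x^{(i)}$ by $\tilde{\mathbf x}^{(i)}$). Let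 $Q_1,\dots,Q_m$ be optimal quantizers for the problem $\min_{Q_1,\dots,Q_m}\mathbb{E}[(\tilde{\mathbf y}-\hat{\mathbf y})^2]$. Then simultaneously for every $i\in\{1,\dots,m\}$, $Q_i$ has the structure $$Q_i(x^{(i)})=\bar c^{(i)}_k\quad\text{if } x^{(i)}\in\bar{\mathcal{D}}^{(i)}_k,\ k\in\{1,\dots,K_i\},$$ where $\bar c^{(i)}_k$ and $\bar{\mathcal D}^{(i)}_k$ are minimizers of $$\min_{c^{(i)}_k,\mathcal{D}^{(i)}_k}\sum_{k=1}^{K_i}\int_{\mathcal{D}^{(i)}_k} f_i(c^{(i)}_k,x^{(i)})\,p_i(x^{(i)})\,d\mu_i(x^{(i)}),$$ with $$f_i(c,x^{(i)})=\mathbb{E}\Big[\Big(\langle c-x^{(i)},\beta^{(i)}\rangle+\sum_{i'\neq i}\langle\tilde{\mathbf{x}}^{(i')}-\mathbf{x}^{(i')},\beta^{(i')}\rangle\Big)^2\,\Big|\,\mathbf{x}^{(i)}=x^{(i)}\Big],$$ where for $i'\neq i$, $\tilde{\mathbf{x}}^{(i')}=Q_{i'}(\mathbf{x}^{(i')})$ is obtained from the optimal quantizer $Q_{i'}$.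
   Context: Expectations are over the distribution of $\mathbf{x}$ with $\beta$ held fixed. $\langle\cdot,\cdot\rangle$ denotes the Euclidean inner product. The minimization defining $\bar c^{(i)}_k,\bar{\mathcal D}^{(i)}_k$ is over codepoints $c^{(i)}_k\in\mathbb{R}^{d_i}$ and partitions $\{\mathcal D^{(i)}_k\}_{k=1}^{K_i}$ of $\mathbb{R}^{d_i}$, with the other quantizers $Q_{i'}$, $i'\neq i$, fixed at their optimal values. *)

theory Defs
  imports "HOL-Probability.Probability"
begin

text \<open>Lebesgue measure on the block space R^{d_i}, realised as extensional
  functions on the index set S (coordinates outside S are undefined).\<close>
definition blk_meas :: "'d set \<Rightarrow> ('d \<Rightarrow> real) measure" where
  "blk_meas S = PiM S (\<lambda>_. lborel)"

definition blk :: "'d set \<Rightarrow> real ^ 'd \<Rightarrow> ('d \<Rightarrow> real)" where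
  "blk S v = restrict (\<lambda>r. v $ r) S"

definition blk_inner :: "'d set \<Rightarrow> ('d \<Rightarrow> real) \<Rightarrow> ('d \<Rightarrow> real) \<Rightarrow> real" where
  "blk_inner S u v = (\<Sum>r\<in>S. u r * v r)"

definition is_quantizer ::
  "'d set \<Rightarrow> nat \<Rightarrow> (nat \<Rightarrow> ('d \<Rightarrow> real)) \<Rightarrow> (nat \<Rightarrow> ('d \<Rightarrow> real) set) \<Rightarrow> bool" where
  "is_quantizer S K c D \<longleftrightarrow>
     (\<forall>k\<in>{1..K}. c k \<in> space (blk_meas S)) \<and>
     (\<forall>k\<in>{1..K}. D k \<in> sets (blk_meas S)) \<and>
     disjoint_family_on D {1..K} \<and>
     (\<Union>k\<in>{1..K}. D k) = space (blk_meas S)"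

definition quantize ::
  "nat \<Rightarrow> (nat \<Rightarrow> ('d \<Rightarrow> real)) \<Rightarrow> (nat \<Rightarrow> ('d \<Rightarrow> real) set) \<Rightarrow> ('d \<Rightarrow> real) \<Rightarrow> ('d \<Rightarrow> real)" where
  "quantize K c D y = c (THE k. k \<in> {1..K} \<and> y \<in> D k)"

definition blk_err ::
  "'d set \<Rightarrow> nat \<Rightarrow> (nat \<Rightarrow> ('d \<Rightarrow> real)) \<Rightarrow> (nat \<Rightarrow> ('d \<Rightarrow> real) set)
    \<Rightarrow> real ^ 'd \<Rightarrow> real ^ 'd \<Rightarrow> real" where
  "blk_err S K c D beta v =
     blk_inner S (\<lambda>r. quantize K c D (blk S v) r - v $ r) (\<lambda>r. beta $ r)"

definition quant_mse ::
  "'a measure \<Rightarrow> ('a \<Rightarrow> real ^ 'd) \<Rightarrow> real ^ 'd \<Rightarrow> nat \<Rightarrow> (nat \<Rightarrow> 'd set) \<Rightarrow> (nat \<Rightarrow> nat)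
    \<Rightarrow> (nat \<Rightarrow> nat \<Rightarrow> ('d \<Rightarrow> real)) \<Rightarrow> (nat \<Rightarrow> nat \<Rightarrow> ('d \<Rightarrow> real) set) \<Rightarrow> ennreal" where
  "quant_mse M X beta m S K c D =
     (\<integral>\<^sup>+ \<omega>. ennreal ((\<Sum>i\<in>{1..m}. blk_err (S i) (K i) (c i) (D i) beta (X \<omega>))\<^sup>2) \<partial>M)"

definition blk_target ::
  "real ^ 'd \<Rightarrow> nat \<Rightarrow> (nat \<Rightarrow> 'd set) \<Rightarrow> (nat \<Rightarrow> nat)
    \<Rightarrow> (nat \<Rightarrow> nat \<Rightarrow> ('d \<Rightarrow> real)) \<Rightarrow> (nat \<Rightarrow> nat \<Rightarrow> ('d \<Rightarrow> real) set)
    \<Rightarrow> nat \<Rightarrow> ('d \<Rightarrow> real) \<Rightarrow> real ^ 'd \<Rightarrow> real" where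
  "blk_target beta m S K c D i cc v =
     (blk_inner (S i) (\<lambda>r. cc r - v $ r) (\<lambda>r. beta $ r)
      + (\<Sum>i'\<in>{1..m} - {i}. blk_err (S i') (K i') (c i') (D i') beta v))\<^sup>2"

text \<open>f is a version of the conditional expectation
  f(cc, y) = E[ blk_target ... cc (X) | X^(i) = y ], i.e. for every codepoint cc,
  f cc is measurable on R^{d_i} and integrates like the target over every
  event {X^(i) \<in> A}, against the law of X^(i), which is p \<mu>_i.\<close>
definition is_cond_exp_version ::
  "'a measure \<Rightarrow> ('a \<Rightarrow> real ^ 'd) \<Rightarrow> real ^ 'd \<Rightarrow> nat \<Rightarrow> (nat \<Rightarrow> 'd set) \<Rightarrow> (nat \<Rightarrow> nat)
    \<Rightarrow> (nat \<Rightarrow> nat \<Rightarrow> ('d \<Rightarrow> real)) \<Rightarrow> (nat \<Rightarrow> nat \<Rightarrow> ('d \<Rightarrow> real) set) \<Rightarrow> nat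
    \<Rightarrow> (('d \<Rightarrow> real) \<Rightarrow> ennreal)
    \<Rightarrow> (('d \<Rightarrow> real) \<Rightarrow> ('d \<Rightarrow> real) \<Rightarrow> ennreal) \<Rightarrow> bool" where
  "is_cond_exp_version M X beta m S K c D i p f \<longleftrightarrow>
     (\<forall>cc\<in>space (blk_meas (S i)).
        f cc \<in> borel_measurable (blk_meas (S i)) \<and>
        (\<forall>A\<in>sets (blk_meas (S i)).
           (\<integral>\<^sup>+ y. f cc y * p y * indicator A y \<partial>blk_meas (S i)) =
           (\<integral>\<^sup>+ \<omega>. ennreal (blk_target beta m S K c D i cc (X \<omega>))
                     * indicator A (blk (S i) (X \<omega>)) \<partial>M)))"

definition blk_objective ::
  "'d set \<Rightarrow> nat \<Rightarrow> (('d \<Rightarrow> real) \<Rightarrow> ennreal) \<Rightarrow> (('d \<Rightarrow> real) \<Rightarrow> ('d \<Rightarrow> real) \<Rightarrow> ennreal)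
    \<Rightarrow> (nat \<Rightarrow> ('d \<Rightarrow> real)) \<Rightarrow> (nat \<Rightarrow> ('d \<Rightarrow> real) set) \<Rightarrow> ennreal" where
  "blk_objective S K p f c D =
     (\<Sum>k\<in>{1..K}. \<integral>\<^sup>+ y. f (c k) y * p y * indicator (D k) y \<partial>blk_meas S)"

end

theory Submission
  imports Defs
begin

text \<open>Replacing the quantizer of block i by an arbitrary quantizer (cc, DD) and splitting
  the mean squared error over the events {x^(i) \<in> DD k}, the defining property of the
  conditional expectation f turns the error into exactly the block objective of (cc, DD).
  So the block objective is the overall error as a function of Q_i alone, with the other
  quantizers fixed, and a jointly optimal family is in particular optimal in each block.\<close>

lemma is_quantizer_cell_unique:
  assumes "is_quantizer S K c D" "k \<in> {1..K}" "k' \<in> {1..K}" "y \<in> D k" "y \<in> D k'"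
  shows "k' = k"
  using assms disjoint_family_onD unfolding is_quantizer_def by fastforce

lemma is_quantizer_cell_exists:
  assumes "is_quantizer S K c D" "y \<in> space (blk_meas S)"
  obtains k where "k \<in> {1..K}" "y \<in> D k"
  using assms unfolding is_quantizer_def by blast

lemma quantize_eq_codepoint:
  assumes "is_quantizer S K c D" "k \<in> {1..K}" "y \<in> D k"
  shows "quantize K c D y = c k"
proof -
  have "(THE k. k \<in> {1..K} \<and> y \<in> D k) = k"
    using assms is_quantizer_cell_unique[OF assms(1)] by (intro the_equality) auto
  then show ?thesis unfolding quantize_def by simp
qed

lemma sum_indicator_cells:
  fixes g :: "nat \<Rightarrow> 'b::comm_semiring_1"
  assumes "is_quantizer S K c D" "k \<in> {1..K}" "y \<in> D k"
  shows "(\<Sum>k'\<in>{1..K}. g k' * indicator (D k') y) = g k"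
proof -
  have "(\<Sum>k'\<in>{1..K}. g k' * indicator (D k') y)
      = g k * indicator (D k) y + (\<Sum>k'\<in>{1..K} - {k}. g k' * indicator (D k') y)"
    using assms(2) by (intro sum.remove) auto
  also have "(\<Sum>k'\<in>{1..K} - {k}. g k' * indicator (D k') y) = 0"
    using is_quantizer_cell_unique[OF assms(1)] assms(2,3) by (intro sum.neutral) fastforce
  finally show ?thesis
    using assms(3) by simp
qed

lemma quantize_as_sum:
  assumes "is_quantizer S K c D" "y \<in> space (blk_meas S)"
  shows "quantize K c D y r = (\<Sum>k\<in>{1..K}. c k r * indicator (D k) y)"
proof -
  obtain k where "k \<in> {1..K}" "y \<in> D k"
    using is_quantizer_cell_exists[OF assms] .
  then show ?thesis
    using quantize_eq_codepoint[OF assms(1)] sum_indicator_cells[OF assms(1), of k y "\<lambda>k. c k r"]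
    by simp
qed

lemma borel_measurable_vec_nth_comp:
  fixes X :: "'a \<Rightarrow> real ^ 'd"
  assumes "X \<in> borel_measurable M"
  shows "(\<lambda>\<omega>. X \<omega> $ r) \<in> borel_measurable M"
  by (rule borel_measurable_continuous_on[OF continuous_on_component[OF continuous_on_id] assms])

lemma borel_measurable_blk_err:
  fixes X :: "'a \<Rightarrow> real ^ 'd"
  assumes X: "X \<in> borel_measurable M"
    and Y: "(\<lambda>\<omega>. blk S (X \<omega>)) \<in> measurable M (blk_meas S)"
    and q: "is_quantizer S K c D"
  shows "(\<lambda>\<omega>. blk_err S K c D beta (X \<omega>)) \<in> borel_measurable M"
proof -
  have D: "\<And>k. k \<in> {1..K} \<Longrightarrow> D k \<in> sets (blk_meas S)"
    using q unfolding is_quantizer_def by blast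
  have h: "(\<lambda>\<omega>. \<Sum>r\<in>S. ((\<Sum>k\<in>{1..K}. c k r * indicator (D k) (blk S (X \<omega>))) - X \<omega> $ r) * beta $ r)
      \<in> borel_measurable M"
    by (intro borel_measurable_sum borel_measurable_times borel_measurable_diff
        borel_measurable_const borel_measurable_vec_nth_comp[OF X]
        measurable_compose[OF Y borel_measurable_indicator[OF D]]) auto
  have eq: "\<And>\<omega>. \<omega> \<in> space M \<Longrightarrow> blk_err S K c D beta (X \<omega>)
      = (\<Sum>r\<in>S. ((\<Sum>k\<in>{1..K}. c k r * indicator (D k) (blk S (X \<omega>))) - X \<omega> $ r) * beta $ r)"
    unfolding blk_err_def blk_inner_def
    using quantize_as_sum[OF q] measurable_space[OF Y] by simp
  show ?thesis
    using h by (simp only: measurable_cong[OF eq])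
qed

lemma borel_measurable_blk_target:
  fixes X :: "'a \<Rightarrow> real ^ 'd"
  assumes X: "X \<in> borel_measurable M"
    and Y: "\<forall>i\<in>{1..m}. (\<lambda>\<omega>. blk (S i) (X \<omega>)) \<in> measurable M (blk_meas (S i))"
    and qs: "\<forall>i\<in>{1..m}. is_quantizer (S i) (K i) (c i) (D i)"
  shows "(\<lambda>\<omega>. blk_target beta m S K c D i cc (X \<omega>)) \<in> borel_measurable M"
proof -
  have "\<And>i'. i' \<in> {1..m} - {i} \<Longrightarrow>
      (\<lambda>\<omega>. blk_err (S i') (K i') (c i') (D i') beta (X \<omega>)) \<in> borel_measurable M"
    using X Y qs by (intro borel_measurable_blk_err) auto
  then show ?thesis
    unfolding blk_target_def blk_inner_def
    by (intro borel_measurable_power borel_measurable_add borel_measurable_sum borel_measurable_times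
        borel_measurable_diff borel_measurable_const borel_measurable_vec_nth_comp[OF X])
qed

lemma sum_blk_err_fun_upd:
  fixes m :: nat
  assumes "i \<in> {1..m}"
  shows "(\<Sum>i'\<in>{1..m}. blk_err (S i') (K i') ((c(i := cc)) i') ((D(i := DD)) i') beta v)
       = blk_err (S i) (K i) cc DD beta v
         + (\<Sum>i'\<in>{1..m} - {i}. blk_err (S i') (K i') (c i') (D i') beta v)"
  by (subst sum.remove[OF _ assms]) (auto intro!: sum.cong)

lemma blk_target_eq_sq_sum_blk_err_fun_upd:
  assumes "is_quantizer (S i) (K i) cc DD" "i \<in> {1..m}" "k \<in> {1..K i}" "blk (S i) v \<in> DD k"
  shows "blk_target beta m S K c D i (cc k) v
       = (\<Sum>i'\<in>{1..m}. blk_err (S i') (K i') ((c(i := cc)) i') ((D(i := DD)) i') beta v)\<^sup>2"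
proof -
  have "blk_err (S i) (K i) cc DD beta v = blk_inner (S i) (\<lambda>r. cc k r - v $ r) (\<lambda>r. beta $ r)"
    unfolding blk_err_def using quantize_eq_codepoint[OF assms(1,3,4)] by simp
  then show ?thesis
    unfolding sum_blk_err_fun_upd[OF assms(2)] blk_target_def by simp
qed

lemma blk_objective_eq_quant_mse_fun_upd:
  fixes X :: "'a \<Rightarrow> real ^ 'd" and m :: nat
  assumes X: "X \<in> borel_measurable M"
    and Y: "\<forall>i\<in>{1..m}. (\<lambda>\<omega>. blk (S i) (X \<omega>)) \<in> measurable M (blk_meas (S i))"
    and qs: "\<forall>i\<in>{1..m}. is_quantizer (S i) (K i) (c i) (D i)"
    and i: "i \<in> {1..m}"
    and f: "is_cond_exp_version M X beta m S K c D i p f"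
    and q: "is_quantizer (S i) (K i) cc DD"
  shows "blk_objective (S i) (K i) p f cc DD = quant_mse M X beta m S K (c(i := cc)) (D(i := DD))"
proof -
  have cc: "\<And>k. k \<in> {1..K i} \<Longrightarrow> cc k \<in> space (blk_meas (S i))"
    and DD: "\<And>k. k \<in> {1..K i} \<Longrightarrow> DD k \<in> sets (blk_meas (S i))"
    using q unfolding is_quantizer_def by blast+
  have Yi: "(\<lambda>\<omega>. blk (S i) (X \<omega>)) \<in> measurable M (blk_meas (S i))"
    using Y i by blast
  let ?g = "\<lambda>k \<omega>. ennreal (blk_target beta m S K c D i (cc k) (X \<omega>))
                    * indicator (DD k) (blk (S i) (X \<omega>))"
  have "blk_objective (S i) (K i) p f cc DD = (\<Sum>k\<in>{1..K i}. \<integral>\<^sup>+ \<omega>. ?g k \<omega> \<partial>M)"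
    unfolding blk_objective_def
    using f cc DD unfolding is_cond_exp_version_def by (intro sum.cong) auto
  also have "\<dots> = (\<integral>\<^sup>+ \<omega>. (\<Sum>k\<in>{1..K i}. ?g k \<omega>) \<partial>M)"
    using borel_measurable_blk_target[OF X Y qs] measurable_compose[OF Yi borel_measurable_indicator[OF DD]]
    by (intro nn_integral_sum[symmetric] borel_measurable_times_ennreal) auto
  also have "\<dots> = quant_mse M X beta m S K (c(i := cc)) (D(i := DD))"
    unfolding quant_mse_def
  proof (rule nn_integral_cong)
    fix \<omega> assume "\<omega> \<in> space M"
    then obtain k where k: "k \<in> {1..K i}" "blk (S i) (X \<omega>) \<in> DD k"
      using is_quantizer_cell_exists[OF q measurable_space[OF Yi]] by blast
    show "(\<Sum>k\<in>{1..K i}. ?g k \<omega>)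
        = ennreal ((\<Sum>i'\<in>{1..m}. blk_err (S i') (K i') ((c(i := cc)) i') ((D(i := DD)) i') beta (X \<omega>))\<^sup>2)"
      unfolding sum_indicator_cells[OF q k] blk_target_eq_sq_sum_blk_err_fun_upd[where S = S and K = K, OF q i k] ..
  qed
  finally show ?thesis .
qed

theorem lemma1:
  fixes M :: "'a measure" and X :: "'a \<Rightarrow> real ^ 'd" and beta :: "real ^ 'd"
    and m :: nat and S :: "nat \<Rightarrow> 'd set" and K :: "nat \<Rightarrow> nat"
    and p :: "nat \<Rightarrow> ('d \<Rightarrow> real) \<Rightarrow> ennreal"
    and c :: "nat \<Rightarrow> nat \<Rightarrow> ('d \<Rightarrow> real)" and D :: "nat \<Rightarrow> nat \<Rightarrow> ('d \<Rightarrow> real) set"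
  assumes "prob_space M"
    and "X \<in> borel_measurable M"
    and "\<forall>i\<in>{1..m}. S i \<noteq> {}"
    and "disjoint_family_on S {1..m}"
    and "\<forall>i\<in>{1..m}. distributed M (blk_meas (S i)) (\<lambda>\<omega>. blk (S i) (X \<omega>)) (p i)"
    and "\<forall>i\<in>{1..m}. is_quantizer (S i) (K i) (c i) (D i)"
    and "\<forall>c' D'. (\<forall>i\<in>{1..m}. is_quantizer (S i) (K i) (c' i) (D' i)) \<longrightarrow>
           quant_mse M X beta m S K c D \<le> quant_mse M X beta m S K c' D'"
  shows "\<forall>i\<in>{1..m}. \<forall>f. is_cond_exp_version M X beta m S K c D i (p i) f \<longrightarrow>
           (\<forall>cc DD. is_quantizer (S i) (K i) cc DD \<longrightarrow>
              blk_objective (S i) (K i) (p i) f (c i) (D i)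
                \<le> blk_objective (S i) (K i) (p i) f cc DD)"
proof (intro ballI allI impI)
  fix i f cc DD
  assume i: "i \<in> {1..m}" and f: "is_cond_exp_version M X beta m S K c D i (p i) f"
    and q: "is_quantizer (S i) (K i) cc DD"
  have Y: "\<forall>i\<in>{1..m}. (\<lambda>\<omega>. blk (S i) (X \<omega>)) \<in> measurable M (blk_meas (S i))"
    using assms(5) unfolding distributed_def by blast
  note objective_eq = blk_objective_eq_quant_mse_fun_upd[OF assms(2) Y assms(6) i f]
  have "blk_objective (S i) (K i) (p i) f (c i) (D i) = quant_mse M X beta m S K c D"
    using objective_eq[of "c i" "D i"] assms(6) i by simp
  also have "\<dots> \<le> quant_mse M X beta m S K (c(i := cc)) (D(i := DD))"
    using assms(6,7) q by auto
  also have "\<dots> = blk_objective (S i) (K i) (p i) f cc DD"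
    using objective_eq[OF q] ..
  finally show "blk_objective (S i) (K i) (p i) f (c i) (D i) \<le> blk_objective (S i) (K i) (p i) f cc DD" .
qed

end
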